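(* $\mathcal M\subset(\gamma\mathcal S)^{\#}=(\tilde\gamma(\mathcal S^* ))^{\#}$. In particular, for every mild mixing system $(X,T)$, all nonempty open $U,V\subset X$, and every $A\subset\mathbb N$ containing a translate of an SIP set, the set $N(U,V)\cap A$ contains a translate of an SIP set.
   Context: A dynamical system $(X,T)$: $X$ compact metric, $T$ a homeomorphism. $\mathbb N=\{1,2,\dots\}$; $N(U,V)=\{n\in\mathbb N:T^n(U)\cap V\ne\emptyset\}$. For finite $F\subset\mathbb Z$, $\sigma_F$ is the sum of its elements ($\sigma_\emptyset=0$); $IP(A)=\{\sigma_F:F\subset A\text{ finite}\}$, $SIP(A)=\{a-b:a,b\in IP(A)\}$. A family on $\mathbb N$ is a collection of subsets closed under supersets; its dual is $\mathcal F^*=\{B: B\cap A\ne\emptyset\ \forall A\in\mathcal F\}$; its sharp dual is $\mathcal F^{\#}=\{A: A\cap B\in\mathcal F\ \forall B\in\mathcal F\}$. $\mathcal S$ is the family of SIP sets: $B\subset\mathbb N$ with $SIP(L)\cap\mathbb N\subset B$ for some infinite $L\subset\mathbb N$. $\gamma\mathcal S$ is the family of sets containing a translate of an SIP set, i.e. $B\subset\mathbb N$ such that $(SIP(L)+u)\cap\mathbb N\subset B$ for some infinite $L\subset\mathbb N$, $u\in\mathbb Z$. For a family $\mathcal F$, $\tilde\gamma\mathcal F=\{A\subset\mathbb N:(A+n)\cap\mathbb N\in\mathcal F\text{ for all }n\in\mathbb Z\}$. A system is mild mixing if for all nonempty open $U,V$, $N(U,V)\in\mathcal S^*$. $\mathcal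 M$ is the family of subsets of $\mathbb N$ containing some $N(U,V)$ with $(X,T)$ mild mixing and $U,V\subset X$ nonempty open. *)

theory Defs
  imports "HOL-Analysis.Analysis"
begin

text \<open>The positive integers N = {1,2,...}, represented inside nat.
  Subsets of N are nat sets contained in Pos; families are nat set sets
  all of whose members are contained in Pos.\<close>

definition Pos :: "nat set" where
  "Pos = {n. 0 < n}"

definition IP :: "nat set \<Rightarrow> int set" where
  "IP A = {int (\<Sum>F) | F. finite F \<and> F \<subseteq> A}"

definition SIP :: "nat set \<Rightarrow> int set" where
  "SIP A = {a - b | a b. a \<in> IP A \<and> b \<in> IP A}"

definition SIP_translate :: "nat set \<Rightarrow> int \<Rightarrow> nat set" where
  "SIP_translate L u = {m \<in> Pos. int m - u \<in> SIP L}"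

definition SIP_family :: "nat set set" where
  "SIP_family = {B. B \<subseteq> Pos \<and> (\<exists>L. infinite L \<and> L \<subseteq> Pos \<and> SIP_translate L 0 \<subseteq> B)}"

definition gamma_SIP_family :: "nat set set" where
  "gamma_SIP_family = {B. B \<subseteq> Pos \<and>
     (\<exists>L u. infinite L \<and> L \<subseteq> Pos \<and> SIP_translate L u \<subseteq> B)}"

definition dual_family :: "nat set set \<Rightarrow> nat set set" where
  "dual_family F = {B. B \<subseteq> Pos \<and> (\<forall>A\<in>F. B \<inter> A \<noteq> {})}"

definition sharp_dual :: "nat set set \<Rightarrow> nat set set" where
  "sharp_dual F = {A. A \<subseteq> Pos \<and> (\<forall>B\<in>F. A \<inter> B \<in> F)}"

definition tilde_gamma :: "nat set set \<Rightarrow> nat set set" where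
  "tilde_gamma F = {A. A \<subseteq> Pos \<and> (\<forall>n::int. {m \<in> Pos. int m - n \<in> int ` A} \<in> F)}"

definition hitting_set :: "('a \<Rightarrow> 'a) \<Rightarrow> 'a set \<Rightarrow> 'a set \<Rightarrow> nat set" where
  "hitting_set T U V = {n \<in> Pos. (T ^^ n) ` U \<inter> V \<noteq> {}}"

definition dyn_system :: "'a::metric_space set \<Rightarrow> ('a \<Rightarrow> 'a) \<Rightarrow> bool" where
  "dyn_system X T \<longleftrightarrow> compact X \<and> (\<exists>S. homeomorphism X X T S)"

definition mild_mixing :: "'a::metric_space set \<Rightarrow> ('a \<Rightarrow> 'a) \<Rightarrow> bool" where
  "mild_mixing X T \<longleftrightarrow> dyn_system X T \<and>
     (\<forall>U V. openin (top_of_set X) U \<and> U \<noteq> {} \<and> openin (top_of_set X) V \<and> V \<noteq> {}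
        \<longrightarrow> hitting_set T U V \<in> dual_family SIP_family)"

end

theory Submission
  imports Defs
begin

text \<open>
  Let \<open>B\<close> contain \<open>(SIP(L) + u) \<inter> \<nat>\<close>. Mild mixing yields a return time \<open>v \<in> N(U,V)\<close>
  with \<open>v - u \<in> SIP(L)\<close>. The open set \<open>W 0 = U \<inter> T^-v V\<close> is then shrunk along
  \<open>W (k+1) = W k \<inter> T^-(n k) (W k)\<close>, where mild mixing again supplies \<open>n k \<in> N(W k, W k)\<close>
  lying in the SIP set of a block of \<open>L\<close> above all earlier blocks. Finite sums of the \<open>n k\<close>
  are return times of a point of \<open>W N\<close> into \<open>W 0\<close>, so \<open>(SIP({n k}) + v) \<inter> \<nat> \<subseteq> N(U,V)\<close>;
  as the blocks are disjoint, the same translate lies in \<open>SIP(L) + u\<close>.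

  The two sharp duals agree because the dual of gamma S is tilde-gamma of the dual of S.
  The nontrivial inclusion uses lacunary subsequences of \<open>L\<close>, whose SIP sets have no small
  nonzero elements, so that an SIP set can be translated without leaving \<open>\<nat>\<close>.
\<close>

section \<open>SIP sets\<close>

lemma IP_mono: "A \<subseteq> B \<Longrightarrow> IP A \<subseteq> IP B"
  unfolding IP_def by blast

lemma SIP_mono: "A \<subseteq> B \<Longrightarrow> SIP A \<subseteq> SIP B"
  unfolding SIP_def using IP_mono by blast

lemma SIP_iff:
  "x \<in> SIP A \<longleftrightarrow> (\<exists>F G. finite F \<and> finite G \<and> F \<subseteq> A \<and> G \<subseteq> A \<and> x = int (\<Sum>F) - int (\<Sum>G))"
  unfolding SIP_def IP_def by blast

lemma SIP_zero [simp]: "0 \<in> SIP A"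
  unfolding SIP_iff by (rule exI[of _ "{}"], rule exI[of _ "{}"]) simp

lemma SIP_uminus: "x \<in> SIP A \<Longrightarrow> - x \<in> SIP A"
  unfolding SIP_iff by (elim exE conjE, intro exI conjI) (assumption | simp)+

lemma SIP_singleton: "int l \<in> SIP {l}"
  unfolding SIP_iff by (rule exI[of _ "{l}"], rule exI[of _ "{}"]) simp

lemma SIP_disjointE:
  assumes "x \<in> SIP A"
  obtains F G where "finite F" "finite G" "F \<subseteq> A" "G \<subseteq> A" "F \<inter> G = {}"
    "x = int (\<Sum>F) - int (\<Sum>G)"
proof -
  obtain F G where FG: "finite F" "finite G" "F \<subseteq> A" "G \<subseteq> A" "x = int (\<Sum>F) - int (\<Sum>G)"
    using assms unfolding SIP_iff by blast
  have "\<Sum>F = \<Sum>(F \<inter> G) + \<Sum>(F - G)"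
    using FG(1) by (rule sum.Int_Diff)
  moreover have "\<Sum>G = \<Sum>(G \<inter> F) + \<Sum>(G - F)"
    using FG(2) by (rule sum.Int_Diff)
  ultimately have "x = int (\<Sum>(F - G)) - int (\<Sum>(G - F))"
    using FG(5) by (simp add: Int_commute)
  with FG(1-4) show thesis
    by (intro that[of "F - G" "G - F"]) auto
qed

lemma SIP_finite_supportE:
  assumes "x \<in> SIP A"
  obtains F where "finite F" "F \<subseteq> A" "x \<in> SIP F"
proof -
  obtain F G where "finite F" "finite G" "F \<subseteq> A" "G \<subseteq> A" "x = int (\<Sum>F) - int (\<Sum>G)"
    using assms unfolding SIP_iff by blast
  then have "x \<in> SIP (F \<union> G)"
    unfolding SIP_iff by blast
  with \<open>finite F\<close> \<open>finite G\<close> \<open>F \<subseteq> A\<close> \<open>G \<subseteq> A\<close> show thesis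
    by (intro that[of "F \<union> G"]) auto
qed

lemma SIP_range_injE:
  assumes "inj s" "x \<in> SIP (range s)"
  obtains I J where "finite I" "finite J" "I \<inter> J = {}"
    "x = int (\<Sum>i\<in>I. s i) - int (\<Sum>i\<in>J. s i)"
proof -
  obtain F G where FG: "finite F" "finite G" "F \<subseteq> range s" "G \<subseteq> range s" "F \<inter> G = {}"
    "x = int (\<Sum>F) - int (\<Sum>G)"
    using assms(2) by (rule SIP_disjointE)
  have F: "F = s ` (s -` F)" and G: "G = s ` (s -` G)"
    using FG(3,4) by auto
  have reindex: "\<Sum>(s ` K) = (\<Sum>i\<in>K. s i)" for K
    using assms(1) by (simp add: sum.reindex inj_on_subset)
  have "x = int (\<Sum>i\<in>s -` F. s i) - int (\<Sum>i\<in>s -` G. s i)"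
    using FG(6) F G reindex by metis
  moreover have "finite (s -` F)" "finite (s -` G)" "s -` F \<inter> s -` G = {}"
    using FG(1,2,5) assms(1) by (auto intro: finite_vimageI)
  ultimately show thesis
    using that by blast
qed

lemma SIP_add_disjoint:
  assumes "x \<in> SIP A" "y \<in> SIP B" "A \<inter> B = {}"
  shows "x + y \<in> SIP (A \<union> B)"
proof -
  obtain F G where FG: "finite F" "finite G" "F \<subseteq> A" "G \<subseteq> A" "x = int (\<Sum>F) - int (\<Sum>G)"
    using assms(1) unfolding SIP_iff by blast
  obtain F' G' where FG': "finite F'" "finite G'" "F' \<subseteq> B" "G' \<subseteq> B" "y = int (\<Sum>F') - int (\<Sum>G')"
    using assms(2) unfolding SIP_iff by blast
  have "F \<inter> F' = {}" "G \<inter> G' = {}"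
    using FG(3,4) FG'(3,4) assms(3) by blast+
  then have "\<Sum>(F \<union> F') = \<Sum>F + \<Sum>F'" "\<Sum>(G \<union> G') = \<Sum>G + \<Sum>G'"
    using FG(1,2) FG'(1,2) by (simp_all add: sum.union_disjoint)
  then have "x + y = int (\<Sum>(F \<union> F')) - int (\<Sum>(G \<union> G'))"
    using FG(5) FG'(5) by simp
  moreover have "finite (F \<union> F')" "finite (G \<union> G')" "F \<union> F' \<subseteq> A \<union> B" "G \<union> G' \<subseteq> A \<union> B"
    using FG FG' by auto
  ultimately show ?thesis
    unfolding SIP_iff by blast
qed

lemma SIP_sum_disjoint_family:
  assumes "finite K" "disjoint_family_on B K" "\<And>k. k \<in> K \<Longrightarrow> y k \<in> SIP (B k)"
  shows "(\<Sum>k\<in>K. y k) \<in> SIP (\<Union>k\<in>K. B k)"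
  using assms
proof (induction K rule: finite_induct)
  case (insert k K)
  have "disjoint_family_on B K"
    using insert.prems(1) disjoint_family_on_mono by blast
  then have "(\<Sum>k\<in>K. y k) \<in> SIP (\<Union>k\<in>K. B k)"
    using insert by blast
  moreover have "B k \<inter> (\<Union>k\<in>K. B k) = {}"
    using insert.prems(1) insert.hyps(2) unfolding disjoint_family_on_def by fastforce
  moreover have "y k \<in> SIP (B k)"
    using insert.prems(2) by blast
  ultimately have "y k + (\<Sum>k\<in>K. y k) \<in> SIP (B k \<union> (\<Union>k\<in>K. B k))"
    using SIP_add_disjoint by blast
  then show ?case
    using insert.hyps by simp
qed simp

lemma SIP_signed_sum_disjoint_family:
  assumes "disjoint_family B" "\<And>k. int (n k) \<in> SIP (B k)"
    and "finite I" "finite J" "I \<inter> J = {}"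
  shows "int (\<Sum>i\<in>I. n i) - int (\<Sum>i\<in>J. n i) \<in> SIP (\<Union>k\<in>I \<union> J. B k)"
proof -
  define y where "y k = (if k \<in> I then int (n k) else - int (n k))" for k
  have "(\<Sum>k\<in>I \<union> J. y k) = (\<Sum>k\<in>I. y k) + (\<Sum>k\<in>J. y k)"
    using assms(3-5) by (rule sum.union_disjoint)
  also have "(\<Sum>k\<in>J. y k) = (\<Sum>k\<in>J. - int (n k))"
    using assms(5) by (intro sum.cong) (auto simp: y_def)
  also have "(\<Sum>k\<in>I. y k) + (\<Sum>k\<in>J. - int (n k)) = int (\<Sum>i\<in>I. n i) - int (\<Sum>i\<in>J. n i)"
    by (simp add: y_def sum_negf)
  finally have "(\<Sum>k\<in>I \<union> J. y k) = int (\<Sum>i\<in>I. n i) - int (\<Sum>i\<in>J. n i)" .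
  moreover have "y k \<in> SIP (B k)" for k
    using assms(2)[of k] SIP_uminus[OF assms(2)[of k]] by (simp add: y_def)
  then have "(\<Sum>k\<in>I \<union> J. y k) \<in> SIP (\<Union>k\<in>I \<union> J. B k)"
    using assms(1,3,4) disjoint_family_on_mono[OF subset_UNIV assms(1)]
    by (intro SIP_sum_disjoint_family) auto
  ultimately show ?thesis by simp
qed

lemma SIP_interval_blocks:
  assumes "mono b" "d \<in> SIP (L \<inter> {..b 0})"
    and "\<And>k. int (n k) \<in> SIP (L \<inter> {b k<..b (Suc k)})"
    and "finite I" "finite J" "I \<inter> J = {}"
  shows "d + (int (\<Sum>i\<in>I. n i) - int (\<Sum>i\<in>J. n i)) \<in> SIP L"
proof -
  define B where "B k = L \<inter> {b k<..b (Suc k)}" for k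
  have "L \<inter> {..b k} \<subseteq> L \<inter> {..b (Suc k)}" for k
    using monoD[OF assms(1), of k "Suc k"] by auto
  then have "disjoint_family (\<lambda>k. L \<inter> {..b (Suc k)} - L \<inter> {..b k})"
    by (rule disjoint_family_Suc)
  moreover have "B = (\<lambda>k. L \<inter> {..b (Suc k)} - L \<inter> {..b k})"
    unfolding B_def by auto
  ultimately have "disjoint_family B"
    by simp
  then have blocks: "int (\<Sum>i\<in>I. n i) - int (\<Sum>i\<in>J. n i) \<in> SIP (\<Union>k\<in>I \<union> J. B k)"
    using assms(3-6) unfolding B_def by (intro SIP_signed_sum_disjoint_family)
  have "L \<inter> {..b 0} \<inter> B k = {}" for k
    using monoD[OF assms(1), of 0 k] unfolding B_def by auto
  then have "L \<inter> {..b 0} \<inter> (\<Union>k\<in>I \<union> J. B k) = {}"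
    by blast
  from SIP_add_disjoint[OF assms(2) blocks this]
  have "d + (int (\<Sum>i\<in>I. n i) - int (\<Sum>i\<in>J. n i)) \<in> SIP (L \<inter> {..b 0} \<union> (\<Union>k\<in>I \<union> J. B k))" .
  also have "\<dots> \<subseteq> SIP L"
    unfolding B_def by (rule SIP_mono) blast
  finally show ?thesis .
qed

lemma lacunary_sum_less:
  fixes s :: "nat \<Rightarrow> nat"
  assumes lac: "\<And>j. (\<Sum>i<j. s i) + M < s j"
    and "finite I" "I \<inter> J = {}" "j \<in> I" "\<And>i. i \<in> I \<union> J \<Longrightarrow> i \<le> j"
  shows "(\<Sum>i\<in>J. s i) + M < (\<Sum>i\<in>I. s i)"
proof -
  have "J \<subseteq> {..<j}"
  proof
    fix i
    assume "i \<in> J"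
    then have "i \<le> j" "i \<noteq> j"
      using assms(3-5) by blast+
    then show "i \<in> {..<j}"
      by simp
  qed
  then have "(\<Sum>i\<in>J. s i) \<le> (\<Sum>i<j. s i)"
    by (intro sum_mono2) auto
  moreover have "s j \<le> (\<Sum>i\<in>I. s i)"
    using member_le_sum[of j I s] assms(2,4) by simp
  ultimately show ?thesis
    using lac[of j] by linarith
qed

lemma lacunary_signed_sum_gap:
  fixes s :: "nat \<Rightarrow> nat"
  assumes lac: "\<And>j. (\<Sum>i<j. s i) + M < s j"
    and "finite I" "finite J" "I \<inter> J = {}" "I \<union> J \<noteq> {}"
  shows "int M < \<bar>int (\<Sum>i\<in>I. s i) - int (\<Sum>i\<in>J. s i)\<bar>"
proof -
  define j where "j = Max (I \<union> J)"
  have j: "j \<in> I \<union> J" "\<And>i. i \<in> I \<union> J \<Longrightarrow> i \<le> j"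
    unfolding j_def using assms(2,3,5) by (simp_all del: Un_iff)
  show ?thesis
  proof (cases "j \<in> I")
    case True
    then show ?thesis
      using lacunary_sum_less[OF lac assms(2,4) True j(2)] by linarith
  next
    case False
    then have "j \<in> J"
      using j(1) by blast
    then have "(\<Sum>i\<in>I. s i) + M < (\<Sum>i\<in>J. s i)"
      using assms(4) j(2) by (intro lacunary_sum_less[OF lac assms(3)]) auto
    then show ?thesis
      by linarith
  qed
qed

lemma infinite_imp_lacunary_sequence:
  assumes "infinite (L :: nat set)"
  obtains s :: "nat \<Rightarrow> nat" where "range s \<subseteq> L" "\<And>j. (\<Sum>i<j. s i) + M < s j"
proof -
  have unbounded: "\<exists>y\<in>L. b < y" for b
    using assms unfolding infinite_nat_iff_unbounded by blast
  have start: "\<exists>y. y \<in> L \<and> M < y"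
    using unbounded by blast
  have step: "\<exists>y. (y \<in> L \<and> M < y) \<and> 2 * x + M < y" for x
    using unbounded[of "2 * x + M"] by auto
  obtain s where s: "\<And>k. s k \<in> L \<and> M < s k" "\<And>k. 2 * s k + M < s (Suc k)"
    using dependent_nat_choice[of "\<lambda>_ y. y \<in> L \<and> M < y" "\<lambda>_ x y. 2 * x + M < y", OF start step]
    by blast
  have "(\<Sum>i<j. s i) + M < s j" for j
  proof (induction j)
    case 0
    then show ?case using s(1) by simp
  next
    case (Suc j)
    then show ?case using s(2)[of j] by simp
  qed
  with s(1) show thesis
    by (intro that) auto
qed

lemma infinite_imp_SIP_gap_subset:
  assumes "infinite (L :: nat set)"
  obtains L' where "L' \<subseteq> L" "infinite L'" "\<And>x. x \<in> SIP L' \<Longrightarrow> x = 0 \<or> int M < \<bar>x\<bar>"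
proof -
  obtain s :: "nat \<Rightarrow> nat" where s: "range s \<subseteq> L" and lac: "\<And>j. (\<Sum>i<j. s i) + M < s j"
    using infinite_imp_lacunary_sequence[OF assms] by blast
  have "s i < s j" if "i < j" for i j
  proof -
    have "s i \<le> (\<Sum>i<j. s i)"
      using that by (intro member_le_sum) auto
    then show ?thesis
      using lac[of j] by linarith
  qed
  then have "inj s"
    by (intro strict_mono_imp_inj_on strict_monoI)
  moreover have "x = 0 \<or> int M < \<bar>x\<bar>" if "x \<in> SIP (range s)" for x
  proof -
    obtain I J where IJ: "finite I" "finite J" "I \<inter> J = {}"
      and x: "x = int (\<Sum>i\<in>I. s i) - int (\<Sum>i\<in>J. s i)"
      using \<open>inj s\<close> \<open>x \<in> SIP (range s)\<close> by (rule SIP_range_injE)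
    show ?thesis
      using lacunary_signed_sum_gap[OF lac IJ] x by (cases "I \<union> J = {}") auto
  qed
  ultimately show thesis
    using s range_inj_infinite by (intro that[of "range s"]) blast+
qed

section \<open>Families of subsets of \<open>Pos\<close>\<close>

lemma SIP_translate_zero_mem_SIP_family:
  "infinite L \<Longrightarrow> L \<subseteq> Pos \<Longrightarrow> SIP_translate L 0 \<in> SIP_family"
  unfolding SIP_family_def SIP_translate_def by blast

lemma SIP_translate_mem_gamma_SIP_family:
  "infinite L \<Longrightarrow> L \<subseteq> Pos \<Longrightarrow> SIP_translate L u \<in> gamma_SIP_family"
  unfolding gamma_SIP_family_def SIP_translate_def by blast

lemma sharp_dual_dual_family:
  assumes sub: "\<And>A. A \<in> F \<Longrightarrow> A \<subseteq> Pos"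
    and up: "\<And>A B. A \<in> F \<Longrightarrow> A \<subseteq> B \<Longrightarrow> B \<subseteq> Pos \<Longrightarrow> B \<in> F"
  shows "sharp_dual (dual_family F) = sharp_dual F"
proof
  show "sharp_dual F \<subseteq> sharp_dual (dual_family F)"
  proof
    fix A
    assume A: "A \<in> sharp_dual F"
    have "A \<inter> C \<in> dual_family F" if C: "C \<in> dual_family F" for C
    proof -
      have "A \<inter> C \<inter> B \<noteq> {}" if "B \<in> F" for B
      proof -
        have "A \<inter> B \<in> F"
          using A \<open>B \<in> F\<close> unfolding sharp_dual_def by blast
        then show ?thesis
          using C unfolding dual_family_def by blast
      qed
      then show ?thesis
        using A C unfolding sharp_dual_def dual_family_def by blast
    qed
    then show "A \<in> sharp_dual (dual_family F)"
      using A unfolding sharp_dual_def by blast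
  qed
next
  show "sharp_dual (dual_family F) \<subseteq> sharp_dual F"
  proof
    fix A
    assume A: "A \<in> sharp_dual (dual_family F)"
    have "A \<inter> B \<in> F" if B: "B \<in> F" for B
    proof (rule ccontr)
      assume "A \<inter> B \<notin> F"
      \<comment> \<open>then the complement of \<open>A \<inter> B\<close> meets every member of \<open>F\<close>, but \<open>A\<close> cannot meet it inside \<open>B\<close>\<close>
      define C where "C = Pos - A \<inter> B"
      have "C \<inter> D \<noteq> {}" if D: "D \<in> F" for D
      proof
        assume "C \<inter> D = {}"
        then have "D \<subseteq> A \<inter> B"
          using sub[OF D] unfolding C_def by blast
        then have "A \<inter> B \<in> F"
          using up[OF D] A unfolding sharp_dual_def by blast
        with \<open>A \<inter> B \<notin> F\<close> show False ..
      qed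
      then have "C \<in> dual_family F"
        unfolding dual_family_def C_def by blast
      then have "A \<inter> C \<in> dual_family F"
        using A unfolding sharp_dual_def by blast
      then show False
        using B unfolding dual_family_def C_def by blast
    qed
    then show "A \<in> sharp_dual F"
      using A unfolding sharp_dual_def by blast
  qed
qed

lemma SIP_translate_shift:
  fixes n :: int
  assumes "infinite L" "L \<subseteq> Pos"
  obtains L' w where "infinite L'" "L' \<subseteq> Pos"
    "\<And>k. k \<in> SIP_translate L' w \<Longrightarrow> \<exists>m \<in> SIP_translate L 0. int m = int k + n"
proof -
  obtain l where l: "l \<in> L"
    using infinite_imp_nonempty[OF assms(1)] by blast
  have "L \<inter> {l<..} = L - {..l}"
    by auto
  then have "infinite (L \<inter> {l<..})"
    using assms(1) by (simp add: Diff_infinite_finite)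
  then obtain L2 where L2: "L2 \<subseteq> L \<inter> {l<..}" "infinite L2"
    and gap: "\<And>x. x \<in> SIP L2 \<Longrightarrow> x = 0 \<or> int (nat \<bar>n\<bar> + l) < \<bar>x\<bar>"
    using infinite_imp_SIP_gap_subset[where M = "nat \<bar>n\<bar> + l"] by blast
  have "\<exists>m \<in> SIP_translate L 0. int m = int k + n" if k: "k \<in> SIP_translate L2 (int l - n)" for k
  proof -
    define s where "s = int k - (int l - n)"
    have "s \<in> SIP L2" "0 < k"
      using k unfolding SIP_translate_def s_def Pos_def by auto
    \<comment> \<open>the gap rules out \<open>s < 0\<close>, since \<open>k = s + l - n\<close> is positive\<close>
    then have "0 \<le> s"
      using gap[of s] unfolding s_def by linarith
    have "int l + s \<in> SIP ({l} \<union> L2)"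
      using L2(1) \<open>s \<in> SIP L2\<close> by (intro SIP_add_disjoint SIP_singleton) auto
    then have "int l + s \<in> SIP L"
      using SIP_mono[of "{l} \<union> L2" L] l L2(1) by blast
    moreover have "0 < l"
      using l assms(2) unfolding Pos_def by blast
    ultimately have "nat (int l + s) \<in> SIP_translate L 0"
      using \<open>0 \<le> s\<close> unfolding SIP_translate_def Pos_def by simp
    moreover have "int (nat (int l + s)) = int k + n"
      using \<open>0 \<le> s\<close> by (simp add: s_def)
    ultimately show ?thesis
      by blast
  qed
  moreover have "L2 \<subseteq> Pos"
    using L2(1) assms(2) by blast
  ultimately show thesis
    using L2(2) that by blast
qed

lemma tilde_gamma_dual_SIP_family: "tilde_gamma (dual_family SIP_family) = dual_family gamma_SIP_family"
proof
  show "tilde_gamma (dual_family SIP_family) \<subseteq> dual_family gamma_SIP_family"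
  proof
    fix A
    assume A: "A \<in> tilde_gamma (dual_family SIP_family)"
    have "A \<subseteq> Pos"
      using A unfolding tilde_gamma_def by blast
    have "A \<inter> B \<noteq> {}" if "B \<in> gamma_SIP_family" for B
    proof -
      obtain L u where L: "infinite L" "L \<subseteq> Pos" "SIP_translate L u \<subseteq> B"
        using \<open>B \<in> gamma_SIP_family\<close> unfolding gamma_SIP_family_def by blast
      have "{m \<in> Pos. int m - (- u) \<in> int ` A} \<in> dual_family SIP_family"
        using A unfolding tilde_gamma_def by blast
      then obtain m where m: "int m - (- u) \<in> int ` A" "m \<in> SIP_translate L 0"
        using SIP_translate_zero_mem_SIP_family[OF L(1,2)] unfolding dual_family_def by blast
      then obtain k where "k \<in> A" "int k = int m + u"
        by auto
      then have "k \<in> SIP_translate L u"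
        using m(2) \<open>A \<subseteq> Pos\<close> unfolding SIP_translate_def by auto
      then show ?thesis
        using \<open>k \<in> A\<close> L(3) by blast
    qed
    with \<open>A \<subseteq> Pos\<close> show "A \<in> dual_family gamma_SIP_family"
      unfolding dual_family_def by blast
  qed
next
  show "dual_family gamma_SIP_family \<subseteq> tilde_gamma (dual_family SIP_family)"
  proof
    fix A
    assume A: "A \<in> dual_family gamma_SIP_family"
    have "{m \<in> Pos. int m - n \<in> int ` A} \<inter> B \<noteq> {}" if "B \<in> SIP_family" for n B
    proof -
      obtain L where L: "infinite L" "L \<subseteq> Pos" "SIP_translate L 0 \<subseteq> B"
        using \<open>B \<in> SIP_family\<close> unfolding SIP_family_def by blast
      obtain L' w where L': "infinite L'" "L' \<subseteq> Pos"
        and shift: "\<And>k. k \<in> SIP_translate L' w \<Longrightarrow> \<exists>m \<in> SIP_translate L 0. int m = int k + n"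
        using SIP_translate_shift[OF L(1,2)] by blast
      obtain k where "k \<in> A" "k \<in> SIP_translate L' w"
        using A SIP_translate_mem_gamma_SIP_family[OF L'] unfolding dual_family_def by blast
      then obtain m where m: "m \<in> SIP_translate L 0" "int m = int k + n"
        using shift by blast
      then have "m \<in> Pos" "int m - n \<in> int ` A"
        using \<open>k \<in> A\<close> unfolding SIP_translate_def by auto
      then show ?thesis
        using m(1) L(3) by blast
    qed
    then show "A \<in> tilde_gamma (dual_family SIP_family)"
      using A unfolding tilde_gamma_def dual_family_def by blast
  qed
qed

section \<open>Return times of mild mixing systems\<close>

lemma mild_mixing_imp_dyn_system: "mild_mixing X T \<Longrightarrow> dyn_system X T"
  unfolding mild_mixing_def by blast

lemma dyn_system_image_continuous:
  assumes "dyn_system X T"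
  shows "T ` X = X" "continuous_on X T"
proof -
  obtain S where "homeomorphism X X T S"
    using assms unfolding dyn_system_def by blast
  then show "T ` X = X" "continuous_on X T"
    by (simp_all add: homeomorphism_def)
qed

lemma dyn_system_funpow_image:
  assumes "dyn_system X T"
  shows "(T ^^ n) ` X = X"
proof (induction n)
  case (Suc n)
  have "(T ^^ Suc n) ` X = T ` (T ^^ n) ` X"
    by (simp add: image_image)
  then show ?case
    using Suc dyn_system_image_continuous(1)[OF assms] by simp
qed simp

lemma dyn_system_continuous_on_funpow:
  assumes "dyn_system X T"
  shows "continuous_on X (T ^^ n)"
proof (induction n)
  case (Suc n)
  have "continuous_on X (T \<circ> T ^^ n)"
    using Suc dyn_system_image_continuous(2)[OF assms] dyn_system_funpow_image[OF assms, of n]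
    by (intro continuous_on_compose) simp_all
  then show ?case
    by simp
qed simp

lemma dyn_system_openin_vimage_funpow:
  assumes "dyn_system X T" "openin (top_of_set X) W"
  shows "openin (top_of_set X) (X \<inter> (T ^^ n) -` W)"
proof (rule continuous_openin_preimage)
  show "continuous_on X (T ^^ n)"
    using assms(1) by (rule dyn_system_continuous_on_funpow)
  show "T ^^ n \<in> X \<rightarrow> X"
    using dyn_system_funpow_image[OF assms(1), of n] by blast
qed (fact assms(2))

lemma dyn_system_vimage_funpow_nonempty:
  assumes "dyn_system X T" "W \<subseteq> X" "W \<noteq> {}"
  shows "X \<inter> (T ^^ n) -` W \<noteq> {}"
proof -
  obtain w where "w \<in> W"
    using assms(3) by blast
  then have "w \<in> (T ^^ n) ` X"
    using dyn_system_funpow_image[OF assms(1), of n] assms(2) by blast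
  with \<open>w \<in> W\<close> show ?thesis
    by blast
qed

lemma hitting_set_vimage_funpow:
  assumes "m \<in> hitting_set T U (X \<inter> (T ^^ c) -` V)"
  shows "c + m \<in> hitting_set T U V"
proof -
  obtain x where "m \<in> Pos" "x \<in> U" "(T ^^ m) x \<in> (T ^^ c) -` V"
    using assms unfolding hitting_set_def by blast
  moreover have "(T ^^ (c + m)) x = (T ^^ c) ((T ^^ m) x)"
    by (simp add: funpow_add)
  ultimately show ?thesis
    unfolding hitting_set_def Pos_def by force
qed

lemma mild_mixing_hitting_set_meets_SIP:
  assumes "mild_mixing X T"
    and "openin (top_of_set X) U" "U \<noteq> {}" "openin (top_of_set X) V" "V \<noteq> {}"
    and "infinite L" "L \<subseteq> Pos"
  obtains m where "m \<in> hitting_set T U V" "int m \<in> SIP L"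
proof -
  have "hitting_set T U V \<in> dual_family SIP_family"
    using assms(1-5) unfolding mild_mixing_def by blast
  then obtain m where "m \<in> hitting_set T U V" "m \<in> SIP_translate L 0"
    using SIP_translate_zero_mem_SIP_family[OF assms(6,7)] unfolding dual_family_def by blast
  then show thesis
    using that unfolding SIP_translate_def by simp
qed

lemma mild_mixing_hitting_set_meets_SIP_translate:
  assumes mm: "mild_mixing X T"
    and U: "openin (top_of_set X) U" "U \<noteq> {}" and V: "openin (top_of_set X) V" "V \<noteq> {}"
    and L: "infinite L" "L \<subseteq> Pos"
  obtains m where "m \<in> hitting_set T U V" "int b < int m - u" "int m - u \<in> SIP (L \<inter> {b<..})"
proof -
  have dyn: "dyn_system X T"
    using mm by (rule mild_mixing_imp_dyn_system)
  obtain l where l: "l \<in> L" "b + nat (- u) < l"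
    using L(1) unfolding infinite_nat_iff_unbounded by blast
  define c where "c = nat (u + int l)"
  have c: "int c = u + int l"
    using l(2) unfolding c_def by linarith
  have "L \<inter> {l<..} = L - {..l}"
    by auto
  then have "infinite (L \<inter> {l<..})"
    using L(1) by (simp add: Diff_infinite_finite)
  moreover have "openin (top_of_set X) (X \<inter> (T ^^ c) -` V)" "X \<inter> (T ^^ c) -` V \<noteq> {}"
    using dyn V openin_subset[OF V(1)]
    by (simp_all add: dyn_system_openin_vimage_funpow dyn_system_vimage_funpow_nonempty)
  ultimately obtain s where s: "s \<in> hitting_set T U (X \<inter> (T ^^ c) -` V)" "int s \<in> SIP (L \<inter> {l<..})"
    using mild_mixing_hitting_set_meets_SIP[OF mm U] L(2) by blast
  \<comment> \<open>the return time \<open>s\<close> is shifted by \<open>c\<close>, which contributes the generator \<open>l\<close> to \<open>c + s - u\<close>\<close>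
  have "int l + int s \<in> SIP ({l} \<union> (L \<inter> {l<..}))"
    using s(2) by (intro SIP_add_disjoint SIP_singleton) auto
  moreover have "{l} \<union> (L \<inter> {l<..}) \<subseteq> L \<inter> {b<..}"
    using l by auto
  moreover have "int (c + s) - u = int l + int s"
    using c by simp
  ultimately have "int (c + s) - u \<in> SIP (L \<inter> {b<..})"
    using SIP_mono by (metis subsetD)
  moreover have "0 < s"
    using s(1) unfolding hitting_set_def Pos_def by blast
  ultimately show thesis
    using that hitting_set_vimage_funpow[OF s(1)] c l(2) by simp
qed

lemma mild_mixing_hitting_set_SIP_block:
  assumes "mild_mixing X T"
    and "openin (top_of_set X) U" "U \<noteq> {}" "openin (top_of_set X) V" "V \<noteq> {}"
    and "infinite L" "L \<subseteq> Pos"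
  obtains m b' where "m \<in> hitting_set T U V" "int b < int m - u" "m \<le> b'"
    "int m - u \<in> SIP (L \<inter> {b<..b'})"
proof -
  obtain m where m: "m \<in> hitting_set T U V" "int b < int m - u" "int m - u \<in> SIP (L \<inter> {b<..})"
    using mild_mixing_hitting_set_meets_SIP_translate[OF assms] by blast
  obtain F where F: "finite F" "F \<subseteq> L \<inter> {b<..}" "int m - u \<in> SIP F"
    using m(3) by (rule SIP_finite_supportE)
  define b' where "b' = max m (Max F)"
  have "F \<subseteq> L \<inter> {b<..b'}"
  proof
    fix x
    assume "x \<in> F"
    then have "x \<le> b'"
      using Max_ge[OF F(1)] unfolding b'_def by (simp add: le_max_iff_disj)
    with \<open>x \<in> F\<close> F(2) show "x \<in> L \<inter> {b<..b'}"
      by auto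
  qed
  then have "int m - u \<in> SIP (L \<inter> {b<..b'})"
    using F(3) SIP_mono by blast
  moreover have "m \<le> b'"
    unfolding b'_def by simp
  ultimately show thesis
    using that m(1,2) by blast
qed

lemma funpow_sum_mem_nested:
  assumes nested: "\<And>k. W (Suc k) \<subseteq> W k \<inter> (T ^^ n k) -` W k"
    and "F \<subseteq> {..<k}" "x \<in> W k"
  shows "(T ^^ (\<Sum>i\<in>F. n i)) x \<in> W 0"
  using assms(2,3)
proof (induction k arbitrary: F x)
  case (Suc k)
  have x: "x \<in> W k" "(T ^^ n k) x \<in> W k"
    using Suc.prems(2) nested[of k] by auto
  show ?case
  proof (cases "k \<in> F")
    case False
    then have "F \<subseteq> {..<k}"
      using Suc.prems(1) by (auto simp: less_Suc_eq)
    then show ?thesis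
      using Suc.IH x(1) by blast
  next
    case True
    have "F - {k} \<subseteq> {..<k}"
      using Suc.prems(1) by auto
    moreover have "(\<Sum>i\<in>F. n i) = (\<Sum>i\<in>F - {k}. n i) + n k"
      using Suc.prems(1) True by (simp add: sum.remove finite_subset)
    ultimately show ?thesis
      using Suc.IH[of "F - {k}" "(T ^^ n k) x"] x(2) by (simp add: funpow_add)
  qed
qed simp

lemma hitting_set_of_nested_returns:
  assumes nested: "\<And>k. W (Suc k) \<subseteq> W k \<inter> (T ^^ n k) -` W k"
    and nonempty: "\<And>k. W k \<noteq> {}" and W0: "W 0 \<subseteq> U \<inter> (T ^^ v) -` V"
    and "finite I" "finite J" "m \<in> Pos"
    and m: "int m - int v = int (\<Sum>i\<in>I. n i) - int (\<Sum>i\<in>J. n i)"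
  shows "m \<in> hitting_set T U V"
proof -
  obtain N where N: "I \<union> J \<subseteq> {..<N}"
    using finite_nat_bounded[of "I \<union> J"] assms(4,5) by blast
  obtain x where x: "x \<in> W N"
    using nonempty by blast
  define y where "y = (T ^^ (\<Sum>i\<in>J. n i)) x"
  define z where "z = (T ^^ (\<Sum>i\<in>I. n i)) x"
  have "y \<in> W 0" "z \<in> W 0"
    unfolding y_def z_def using funpow_sum_mem_nested[OF nested _ x] N by blast+
  have "m + (\<Sum>i\<in>J. n i) = v + (\<Sum>i\<in>I. n i)"
    using m by linarith
  have "(T ^^ m) y = (T ^^ (m + (\<Sum>i\<in>J. n i))) x"
    unfolding y_def by (simp add: funpow_add)
  also have "\<dots> = (T ^^ (v + (\<Sum>i\<in>I. n i))) x"
    unfolding \<open>m + (\<Sum>i\<in>J. n i) = v + (\<Sum>i\<in>I. n i)\<close> ..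
  also have "\<dots> = (T ^^ v) z"
    unfolding z_def by (simp add: funpow_add)
  finally have "(T ^^ m) y \<in> V"
    using \<open>z \<in> W 0\<close> W0 by auto
  moreover have "y \<in> U"
    using \<open>y \<in> W 0\<close> W0 by blast
  ultimately show ?thesis
    using \<open>m \<in> Pos\<close> unfolding hitting_set_def by blast
qed

lemma mild_mixing_self_return_SIP_block:
  assumes mm: "mild_mixing X T"
    and W: "openin (top_of_set X) W" "W \<noteq> {}" and L: "infinite L" "L \<subseteq> Pos"
  obtains m b' where "b < m" "m \<le> b'" "int m \<in> SIP (L \<inter> {b<..b'})"
    "openin (top_of_set X) (W \<inter> (T ^^ m) -` W)" "W \<inter> (T ^^ m) -` W \<noteq> {}"
proof -
  obtain m b' where m: "m \<in> hitting_set T W W" "int b < int m - 0" "m \<le> b'"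
    "int m - 0 \<in> SIP (L \<inter> {b<..b'})"
    using mild_mixing_hitting_set_SIP_block[OF mm W W L, where u = 0 and b = b] by blast
  have "W \<inter> (T ^^ m) -` W = W \<inter> (X \<inter> (T ^^ m) -` W)"
    using openin_imp_subset[OF W(1)] by blast
  then have "openin (top_of_set X) (W \<inter> (T ^^ m) -` W)"
    using W(1) mild_mixing_imp_dyn_system[OF mm] by (simp add: openin_Int dyn_system_openin_vimage_funpow)
  moreover have "W \<inter> (T ^^ m) -` W \<noteq> {}"
    using m(1) unfolding hitting_set_def by blast
  ultimately show thesis
    using that m(2-4) by simp
qed

lemma mild_mixing_nested_returns:
  assumes mm: "mild_mixing X T"
    and W0: "openin (top_of_set X) W0" "W0 \<noteq> {}" and L: "infinite L" "L \<subseteq> Pos"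
  obtains W :: "nat \<Rightarrow> 'a::metric_space set" and b n :: "nat \<Rightarrow> nat"
  where "W 0 = W0" "b 0 = b0" "\<And>k. W k \<noteq> {}" "\<And>k. W (Suc k) = W k \<inter> (T ^^ n k) -` W k"
    "\<And>k. b k < n k" "\<And>k. n k \<le> b (Suc k)" "\<And>k. int (n k) \<in> SIP (L \<inter> {b k<..b (Suc k)})"
proof -
  define P where "P k s \<longleftrightarrow> openin (top_of_set X) (fst s) \<and> fst s \<noteq> {} \<and> (k = 0 \<longrightarrow> s = (W0, b0))"
    for k :: nat and s :: "'a set \<times> nat"
  define Q where "Q k s s' \<longleftrightarrow> (\<exists>m. snd s < m \<and> m \<le> snd s' \<and> int m \<in> SIP (L \<inter> {snd s<..snd s'}) \<and>
      fst s' = fst s \<inter> (T ^^ m) -` fst s)"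
    for k :: nat and s s' :: "'a set \<times> nat"
  have "\<exists>s. P 0 s"
    using W0 unfolding P_def by (intro exI[of _ "(W0, b0)"]) simp
  moreover have "\<exists>s'. P (Suc k) s' \<and> Q k s s'" if "P k s" for k s
  proof -
    have "openin (top_of_set X) (fst s)" "fst s \<noteq> {}"
      using \<open>P k s\<close> unfolding P_def by blast+
    then obtain m b' where "snd s < m" "m \<le> b'" "int m \<in> SIP (L \<inter> {snd s<..b'})"
      "openin (top_of_set X) (fst s \<inter> (T ^^ m) -` fst s)" "fst s \<inter> (T ^^ m) -` fst s \<noteq> {}"
      using mild_mixing_self_return_SIP_block[OF mm _ _ L] by blast
    then show ?thesis
      unfolding P_def Q_def by (intro exI[of _ "(fst s \<inter> (T ^^ m) -` fst s, b')"]) auto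
  qed
  ultimately obtain f where f: "\<And>k. P k (f k) \<and> Q k (f k) (f (Suc k))"
    using dependent_nat_choice[of P Q] by blast
  define W where "W k = fst (f k)" for k
  define b where "b k = snd (f k)" for k
  have "\<forall>k. \<exists>m. b k < m \<and> m \<le> b (Suc k) \<and> int m \<in> SIP (L \<inter> {b k<..b (Suc k)}) \<and>
      W (Suc k) = W k \<inter> (T ^^ m) -` W k"
    using f unfolding Q_def W_def b_def by blast
  then obtain n where "\<And>k. b k < n k \<and> n k \<le> b (Suc k) \<and> int (n k) \<in> SIP (L \<inter> {b k<..b (Suc k)}) \<and>
      W (Suc k) = W k \<inter> (T ^^ n k) -` W k"
    by metis
  moreover have "W 0 = W0" "b 0 = b0" "W k \<noteq> {}" for k
    using f[of 0] f[of k] unfolding P_def W_def b_def by auto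
  ultimately show thesis
    using that by blast
qed

lemma mild_mixing_hitting_set_Int_SIP_translate:
  assumes mm: "mild_mixing X T"
    and U: "openin (top_of_set X) U" "U \<noteq> {}" and V: "openin (top_of_set X) V" "V \<noteq> {}"
    and L: "infinite L" "L \<subseteq> Pos"
  obtains L' v where "infinite L'" "L' \<subseteq> Pos"
    "SIP_translate L' v \<subseteq> hitting_set T U V \<inter> SIP_translate L u"
proof -
  obtain v b0 where v: "v \<in> hitting_set T U V" "int v - u \<in> SIP (L \<inter> {0<..b0})"
    using mild_mixing_hitting_set_SIP_block[OF assms, where u = u and b = 0] by blast
  define W0 where "W0 = U \<inter> (X \<inter> (T ^^ v) -` V)"
  have W0_open: "openin (top_of_set X) W0"
    unfolding W0_def using U(1) dyn_system_openin_vimage_funpow[OF mild_mixing_imp_dyn_system[OF mm] V(1)]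
    by (rule openin_Int)
  obtain x where "x \<in> U" "(T ^^ v) x \<in> V"
    using v(1) unfolding hitting_set_def by blast
  then have "W0 \<noteq> {}"
    using openin_imp_subset[OF U(1)] unfolding W0_def by blast
  obtain W b n where W0_eq: "W 0 = W0" and b0_eq: "b 0 = b0" and nonempty: "\<And>k. W k \<noteq> {}"
    and nested: "\<And>k. W (Suc k) = W k \<inter> (T ^^ n k) -` W k"
    and b_less_n: "\<And>k. b k < n k" and n_le_b: "\<And>k. n k \<le> b (Suc k)"
    and n: "\<And>k. int (n k) \<in> SIP (L \<inter> {b k<..b (Suc k)})"
    by (rule mild_mixing_nested_returns[OF mm W0_open \<open>W0 \<noteq> {}\<close> L, of b0], rule that)
  have "strict_mono n"
    unfolding strict_mono_Suc_iff using b_less_n n_le_b le_less_trans by blast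
  then have "inj n"
    by (rule strict_mono_imp_inj_on)
  have "mono b"
    unfolding mono_iff_le_Suc using b_less_n n_le_b less_imp_le le_trans by blast
  have "SIP_translate (range n) v \<subseteq> hitting_set T U V \<inter> SIP_translate L u"
  proof
    fix m
    assume "m \<in> SIP_translate (range n) v"
    then have "m \<in> Pos" and m_SIP: "int m - int v \<in> SIP (range n)"
      unfolding SIP_translate_def by auto
    obtain I J where IJ: "finite I" "finite J" "I \<inter> J = {}"
      and m: "int m - int v = int (\<Sum>i\<in>I. n i) - int (\<Sum>i\<in>J. n i)"
      using \<open>inj n\<close> m_SIP by (rule SIP_range_injE)
    have "W 0 \<subseteq> U \<inter> (T ^^ v) -` V"
      unfolding W0_eq W0_def by blast
    then have hit: "m \<in> hitting_set T U V"
      using nonempty nested IJ(1,2) \<open>m \<in> Pos\<close> m by (intro hitting_set_of_nested_returns) auto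
    have "L \<inter> {0<..b0} \<subseteq> L \<inter> {..b 0}"
      using b0_eq by auto
    then have "int v - u \<in> SIP (L \<inter> {..b 0})"
      using v(2) SIP_mono by blast
    then have "(int v - u) + (int (\<Sum>i\<in>I. n i) - int (\<Sum>i\<in>J. n i)) \<in> SIP L"
      using \<open>mono b\<close> n IJ by (intro SIP_interval_blocks)
    moreover have "(int v - u) + (int (\<Sum>i\<in>I. n i) - int (\<Sum>i\<in>J. n i)) = int m - u"
      using m by linarith
    ultimately have "int m - u \<in> SIP L"
      by metis
    then have "m \<in> SIP_translate L u"
      using \<open>m \<in> Pos\<close> unfolding SIP_translate_def by simp
    with hit show "m \<in> hitting_set T U V \<inter> SIP_translate L u"
      by blast
  qed
  moreover have "range n \<subseteq> Pos"
    using b_less_n unfolding Pos_def by (auto intro: le_less_trans)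
  ultimately show thesis
    using that range_inj_infinite[OF \<open>inj n\<close>] by blast
qed

lemma mild_mixing_hitting_set_Int_mem_gamma_SIP_family:
  assumes "mild_mixing X T"
    and "openin (top_of_set X) U" "U \<noteq> {}" "openin (top_of_set X) V" "V \<noteq> {}"
    and "B \<in> gamma_SIP_family"
  shows "hitting_set T U V \<inter> B \<in> gamma_SIP_family"
proof -
  obtain L u where L: "infinite L" "L \<subseteq> Pos" "SIP_translate L u \<subseteq> B"
    using assms(6) unfolding gamma_SIP_family_def by blast
  obtain L' v where "infinite L'" "L' \<subseteq> Pos" "SIP_translate L' v \<subseteq> hitting_set T U V \<inter> SIP_translate L u"
    using mild_mixing_hitting_set_Int_SIP_translate[OF assms(1-5) L(1,2)] by blast
  moreover have "hitting_set T U V \<subseteq> Pos"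
    unfolding hitting_set_def by blast
  ultimately show ?thesis
    using L(3) unfolding gamma_SIP_family_def by blast
qed

theorem theorem5p2:
  fixes X :: "'a::metric_space set" and T :: "'a \<Rightarrow> 'a" and U V :: "'a set"
  assumes "mild_mixing X T"
    and "openin (top_of_set X) U" and "U \<noteq> {}"
    and "openin (top_of_set X) V" and "V \<noteq> {}"
  shows "hitting_set T U V \<in> sharp_dual gamma_SIP_family
    \<and> sharp_dual gamma_SIP_family = sharp_dual (tilde_gamma (dual_family SIP_family))
    \<and> (\<forall>A \<in> gamma_SIP_family. hitting_set T U V \<inter> A \<in> gamma_SIP_family)"
proof -
  have Int_mem: "\<forall>A \<in> gamma_SIP_family. hitting_set T U V \<inter> A \<in> gamma_SIP_family"
    using mild_mixing_hitting_set_Int_mem_gamma_SIP_family[OF assms] by blast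
  moreover have "hitting_set T U V \<in> sharp_dual gamma_SIP_family"
    using Int_mem unfolding sharp_dual_def hitting_set_def by blast
  moreover have "sharp_dual (dual_family gamma_SIP_family) = sharp_dual gamma_SIP_family"
    by (rule sharp_dual_dual_family; unfold gamma_SIP_family_def; blast)
  ultimately show ?thesis
    by (simp add: tilde_gamma_dual_SIP_family)
qed

end
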